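(* Let $\Lambda\in\{\Lambda_G,\Lambda_U\}$ and assume there exist constants $c_{\mathrm{Fro}},C_{\mathrm{Fro}}>0$ such that $c_{\mathrm{Fro}}\|\mathbf{M}\|_{\mathrm{Fro}}\le\|\mathbf{M}\|_\Lambda\le C_{\mathrm{Fro}}\|\mathbf{M}\|_{\mathrm{Fro}}$ for all $\mathbf{M}\in S_d(\mathbb{R})$. Consider $E=(S_d(\mathbb{R}),\|\cdot\|_{\mathrm{Fro}})$, $F=(S_d(\mathbb{R}),\|\cdot\|_\Lambda)$, $\Omega$ the set of invertible symmetric matrices, $f=\operatorname{inv}:\boldsymbol\Theta\mapsto\boldsymbol\Theta^{-1}$, and $\mathfrak{X}=\mathfrak{S}^{-1}_{k,a,b}=\{\boldsymbol\Theta\in S_d^{++}(\mathbb{R}):\ \|\boldsymbol\Theta\|_0\le d+2k,\ \operatorname{spec}(\boldsymbol\Theta)\subseteq[a,b]\}$ with $0<a\le b$. Then on $\mathfrak{X}$, $f$ is $(\alpha,\beta)$-bi-Lipschitz, i.e. $\alpha\|\boldsymbol\Theta_1-\boldsymbol\Theta_2\|_{\mathrm{Fro}}\le\|\boldsymbol\Theta_1^{-1}-\boldsymbol\Theta_2^{-1}\|_\Lambda\le\beta\|\boldsymbol\Theta_1-\boldsymbol\Theta_2\|_{\mathrm{Fro}}$ for all $\boldsymbol\Theta_1,\boldsymbol\Theta_2\in\mathfrak{X}$; it satisfies $\|f(\boldsymbol\Theta_1)-f(\boldsymbol\Theta_2)-\mathrm{D}f_{\boldsymbol\Theta_2}(\boldsymbol\Theta_1-\boldsymbol\Theta_2)\|_\Lambda\le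 L\|\boldsymbol\Theta_1-\boldsymbol\Theta_2\|_{\mathrm{Fro}}^2$ and $\|\mathrm{D}f_{\boldsymbol\Theta_1}-\mathrm{D}f_{\boldsymbol\Theta_2}\|_{\mathrm{op}}\le\zeta\|\boldsymbol\Theta_1-\boldsymbol\Theta_2\|_{\mathrm{Fro}}$ for all $\boldsymbol\Theta_1,\boldsymbol\Theta_2\in\mathfrak{X}$; with $$\alpha=\frac{c_{\mathrm{Fro}}}{b^2},\quad\beta=\frac{C_{\mathrm{Fro}}}{a^2},\quad L=\frac{C_{\mathrm{Fro}}}{a^3},\quad\zeta=2L.$$
   Context: $S_d(\mathbb{R})$: real symmetric $d\times d$ matrices; $S_d^{++}(\mathbb{R})$: symmetric positive definite ones; $\|\mathbf{M}\|_0$: number of nonzero entries; $\operatorname{spec}$: spectrum. $\Lambda_G=\mathcal{N}(0,\frac1d\mathbf{I}_d)$, $\Lambda_U$ the uniform distribution on $\mathbb{S}^{d-1}$, and $\|\mathbf{M}\|_\Lambda=\mathbb{E}_{\mathbf{a}\sim\Lambda}[|\mathbf{a}^\top\mathbf{M}\mathbf{a}|]$. $\mathrm{D}f_{\boldsymbol\Theta}$ is the differential of the matrix inverse at $\boldsymbol\Theta$, i.e. $\mathbf{H}\mapsto-\boldsymbol\Theta^{-1}\mathbf{H}\boldsymbol\Theta^{-1}$, and $\|T\|_{\mathrm{op}}=\sup_{\|\mathbf{H}\|_{\mathrm{Fro}}\le1}\|T(\mathbf{H})\|_\Lambda$. *)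

theory Defs
  imports "HOL-Probability.Probability"
begin

text \<open>Matrices in S_d(R) are rendered as real^'n^'n, with d = CARD('n).\<close>

definition symmetric_mat :: "real^'n^'n \<Rightarrow> bool" where
  "symmetric_mat M \<longleftrightarrow> transpose M = M"

definition pos_def_mat :: "real^'n^'n \<Rightarrow> bool" where
  "pos_def_mat M \<longleftrightarrow> symmetric_mat M \<and> (\<forall>x. x \<noteq> 0 \<longrightarrow> x \<bullet> (M *v x) > 0)"

definition frob_norm :: "real^'n^'n \<Rightarrow> real" where
  "frob_norm M = sqrt (\<Sum>i\<in>UNIV. \<Sum>j\<in>UNIV. (M $ i $ j)^2)"

definition l0_norm :: "real^'n^'n \<Rightarrow> nat" where
  "l0_norm M = card {(i, j). M $ i $ j \<noteq> 0}"

definition spec :: "real^'n^'n \<Rightarrow> real set" where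
  "spec M = {c. \<exists>v. v \<noteq> 0 \<and> M *v v = c *s v}"

text \<open>Gaussian N(0, (1/d) I_d) on R^d (independent coordinates of standard deviation 1/sqrt d).\<close>
definition Lambda_G :: "(real^'n) measure" where
  "Lambda_G = density lborel
     (\<lambda>x. ennreal (\<Prod>i\<in>UNIV. normal_density 0 (1 / sqrt (real CARD('n))) (x $ i)))"

text \<open>Uniform (normalized surface) measure on the unit sphere, as the cone measure:
  the radial projection of the uniform distribution on the unit ball.\<close>
definition Lambda_U :: "(real^'n) measure" where
  "Lambda_U = distr (uniform_measure lborel (ball 0 1)) borel (\<lambda>x. x /\<^sub>R norm x)"

definition lam_norm :: "(real^'n) measure \<Rightarrow> real^'n^'n \<Rightarrow> real" where
  "lam_norm \<Lambda> M = (\<integral>a. \<bar>a \<bullet> (M *v a)\<bar> \<partial>\<Lambda>)"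

definition Dinv :: "real^'n^'n \<Rightarrow> real^'n^'n \<Rightarrow> real^'n^'n" where
  "Dinv \<Theta> H = - (matrix_inv \<Theta> ** H ** matrix_inv \<Theta>)"

definition op_norm_lam :: "(real^'n) measure \<Rightarrow> (real^'n^'n \<Rightarrow> real^'n^'n) \<Rightarrow> real" where
  "op_norm_lam \<Lambda> T = Sup ((\<lambda>H. lam_norm \<Lambda> (T H)) ` {H. symmetric_mat H \<and> frob_norm H \<le> 1})"

definition S_inv_set :: "nat \<Rightarrow> real \<Rightarrow> real \<Rightarrow> (real^'n^'n) set" where
  "S_inv_set k a b = {\<Theta>. pos_def_mat \<Theta> \<and> l0_norm \<Theta> \<le> CARD('n) + 2 * k \<and> spec \<Theta> \<subseteq> {a..b}}"

end

theory Submission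
  imports Defs
begin

(* Such a Theta scales Frobenius norms of products by at most b, and its inverse, whose singular
   values lie in [1/b, 1/a], by at most 1/a. With Delta = Theta1 - Theta2, the resolvent identity
   Theta1^-1 - Theta2^-1 = - Theta1^-1 Delta Theta2^-1 turns the difference of inverses, the
   first-order remainder Theta1^-1 Delta Theta2^-1 Delta Theta2^-1 and the difference of the
   derivatives into such products, which gives all four bounds in Frobenius norm; the norm
   equivalence transfers them to the Lambda-norm.
   The singular value bounds follow from spec Theta in [a, b] through the Rayleigh quotient of
   Theta^2: its extreme values on the unit sphere are eigenvalues of Theta^2, i.e. squares of
   eigenvalues of Theta up to sign. *)

section \<open>Frobenius norm of matrix products\<close>

lemma frob_norm_eq_norm: "frob_norm (M::real^'n^'n) = norm M"
  unfolding frob_norm_def norm_vec_def L2_set_def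
  by (simp add: sum_nonneg)

lemma norm_transpose: "norm (transpose (M::real^'n^'m)) = norm M"
  unfolding norm_vec_def L2_set_def transpose_def
  by (simp add: sum_nonneg) (rule sum.swap)

lemma norm_matrix_mul_right_le:
  fixes X :: "real^'m^'n" and A :: "real^'k^'m"
  assumes A: "\<And>x. norm (transpose A *v x) \<le> c * norm x"
  shows "norm (X ** A) \<le> c * norm X"
proof -
  have "0 \<le> c"
    using order_trans[OF norm_ge_zero A[of "axis undefined 1"]] by simp
  have "norm (X ** A) = L2_set (\<lambda>i. norm (transpose A *v X $ i)) UNIV"
    by (simp add: norm_vec_def vec_eq_iff matrix_matrix_mult_def vector_matrix_mult_def mult.commute)
  also have "\<dots> \<le> L2_set (\<lambda>i. c * norm (X $ i)) UNIV"
    by (rule L2_set_mono) (use A in auto)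
  also have "\<dots> = c * norm X"
    using \<open>0 \<le> c\<close> by (simp add: L2_set_right_distrib[symmetric] norm_vec_def)
  finally show ?thesis .
qed

lemma norm_matrix_mul_left_le:
  fixes A :: "real^'m^'n" and X :: "real^'k^'m"
  assumes "\<And>x. norm (A *v x) \<le> c * norm x"
  shows "norm (A ** X) \<le> c * norm X"
proof -
  have "norm (transpose X ** transpose A) \<le> c * norm (transpose X)"
    by (rule norm_matrix_mul_right_le) (simp add: assms)
  then show ?thesis
    by (metis matrix_transpose_mul norm_transpose)
qed

lemma norm_matrix_vector_mul_le: "norm ((A::real^'m^'n) *v x) \<le> norm A * norm x"
proof -
  have "norm (A *v x) = L2_set (\<lambda>i. \<bar>A $ i \<bullet> x\<bar>) UNIV"
    by (simp add: norm_vec_def matrix_vector_mul_component)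
  also have "\<dots> \<le> L2_set (\<lambda>i. norm (A $ i) * norm x) UNIV"
    by (rule L2_set_mono) (simp_all add: Cauchy_Schwarz_ineq2)
  also have "\<dots> = norm A * norm x"
    by (simp add: L2_set_left_distrib[symmetric] norm_vec_def)
  finally show ?thesis .
qed

lemma norm_matrix_mul_le: "norm ((A::real^'m^'n) ** B) \<le> norm A * norm B"
  by (rule norm_matrix_mul_left_le[OF norm_matrix_vector_mul_le])

lemma matrix_diff_ldistrib: "(A::'a::ring_1^'n^'m) ** (B - C) = A ** B - A ** C"
  by (simp add: vec_eq_iff matrix_matrix_mult_def sum_subtractf algebra_simps)

lemma matrix_diff_rdistrib: "((A::'a::ring_1^'n^'m) - B) ** C = A ** C - B ** C"
  by (simp add: vec_eq_iff matrix_matrix_mult_def sum_subtractf algebra_simps)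

lemma matrix_uminus_left: "(- A) ** B = - ((A::'a::ring_1^'n^'m) ** B)"
  by (simp add: vec_eq_iff matrix_matrix_mult_def sum_negf)

lemma matrix_uminus_right: "(A::'a::ring_1^'n^'m) ** (- B) = - (A ** B)"
  by (simp add: vec_eq_iff matrix_matrix_mult_def sum_negf)

lemma uminus_matrix_vector_mult: "(- A) *v x = - (A *v (x::'a::ring_1^'n))"
  by (simp add: vec_eq_iff matrix_vector_mult_def sum_negf)

lemma symmetric_mat_diff: "symmetric_mat A \<Longrightarrow> symmetric_mat B \<Longrightarrow> symmetric_mat (A - B)"
  unfolding symmetric_mat_def by (simp add: vec_eq_iff transpose_def)

lemma symmetric_mat_uminus: "symmetric_mat A \<Longrightarrow> symmetric_mat (- A)"
  unfolding symmetric_mat_def by (simp add: vec_eq_iff transpose_def)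

lemma symmetric_mat_zero: "symmetric_mat 0"
  unfolding symmetric_mat_def by (simp add: vec_eq_iff transpose_def)

lemma symmetric_mat_sandwich:
  "symmetric_mat P \<Longrightarrow> symmetric_mat X \<Longrightarrow> symmetric_mat (P ** X ** P)"
  unfolding symmetric_mat_def by (simp add: matrix_transpose_mul matrix_mul_assoc)

lemma symmetric_mat_square: "symmetric_mat A \<Longrightarrow> symmetric_mat (A ** A)"
  unfolding symmetric_mat_def by (simp add: matrix_transpose_mul)

lemma inner_symmetric_mat:
  assumes "symmetric_mat S"
  shows "x \<bullet> (S *v y) = (S *v x) \<bullet> y"
  by (metis assms dot_lmul_matrix symmetric_mat_def transpose_matrix_vector)

lemma matrix_inv_cancel:
  fixes A :: "'a::field^'n^'n"
  assumes "invertible A"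
  shows "A ** matrix_inv A = mat 1" "matrix_inv A ** A = mat 1"
  using someI_ex[OF assms[unfolded invertible_def]] unfolding matrix_inv_def by auto

lemma matrix_inv_unique:
  fixes A :: "'a::field^'n^'n"
  assumes "invertible A" "A ** B = mat 1"
  shows "matrix_inv A = B"
  by (metis assms matrix_inv_cancel(2) matrix_mul_assoc matrix_mul_lid matrix_mul_rid)

lemma matrix_inv_matrix_inv:
  fixes A :: "'a::field^'n^'n"
  assumes "invertible A"
  shows "invertible (matrix_inv A)" "matrix_inv (matrix_inv A) = A"
proof -
  show inv: "invertible (matrix_inv A)"
    using matrix_inv_cancel[OF assms] invertible_def by blast
  show "matrix_inv (matrix_inv A) = A"
    by (rule matrix_inv_unique[OF inv matrix_inv_cancel(2)[OF assms]])
qed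

lemma symmetric_matrix_inv:
  fixes A :: "real^'n^'n"
  assumes "symmetric_mat A" "invertible A"
  shows "symmetric_mat (matrix_inv A)"
proof -
  note cancel = matrix_inv_cancel[OF assms(2)]
  have left: "transpose (matrix_inv A) ** A = mat 1"
    using arg_cong[OF cancel(1), of transpose] assms(1)
    by (simp add: matrix_transpose_mul symmetric_mat_def)
  have "transpose (matrix_inv A) = (transpose (matrix_inv A) ** A) ** matrix_inv A"
    by (simp add: cancel flip: matrix_mul_assoc)
  then show ?thesis
    by (simp add: left symmetric_mat_def)
qed

lemma matrix_inv_diff:
  fixes A B :: "'a::field^'n^'n"
  assumes "invertible A" "invertible B"
  shows "matrix_inv A - matrix_inv B = matrix_inv A ** (B - A) ** matrix_inv B"
proof -
  have "matrix_inv A ** (B - A) ** matrix_inv B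
      = matrix_inv A ** (B ** matrix_inv B) - (matrix_inv A ** A) ** matrix_inv B"
    by (simp add: matrix_diff_ldistrib matrix_diff_rdistrib matrix_mul_assoc)
  then show ?thesis
    by (simp add: matrix_inv_cancel assms)
qed

section \<open>Rayleigh quotients and spectral bounds\<close>

lemma in_spec_iff: "l \<in> spec A \<longleftrightarrow> (\<exists>v. v \<noteq> 0 \<and> A *v v = l *\<^sub>R v)"
  by (simp add: spec_def scalar_mult_eq_scaleR)

lemma linear_coeff_eq_0_if_quadratic_nonpos:
  fixes B C :: real
  assumes "\<And>t. t * B + t\<^sup>2 * C \<le> 0"
  shows "B = 0"
proof (rule ccontr)
  assume "B \<noteq> 0"
  define e where "e = \<bar>C\<bar> + 1"
  have "e > 0" "e + C > 0"
    unfolding e_def by linarith+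
  then have "(B / e) * B + (B / e)\<^sup>2 * C = B\<^sup>2 * (e + C) / e\<^sup>2"
    by (simp add: field_simps power2_eq_square)
  also have "\<dots> > 0"
    using \<open>B \<noteq> 0\<close> \<open>e > 0\<close> \<open>e + C > 0\<close> by simp
  finally show False
    using assms[of "B / e"] by simp
qed

lemma quadratic_form_add_scaleR:
  assumes "symmetric_mat S"
  shows "(x + t *\<^sub>R y) \<bullet> (S *v (x + t *\<^sub>R y))
       = x \<bullet> (S *v x) + 2 * t * ((S *v x) \<bullet> y) + t\<^sup>2 * (y \<bullet> (S *v y))"
  using inner_symmetric_mat[OF assms, of x y]
  by (simp add: matrix_vector_right_distrib matrix_vector_mult_scaleR inner_add_left
      inner_add_right inner_commute algebra_simps power2_eq_square)

lemma symmetric_rayleigh_max: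
  fixes S :: "real^'n^'n"
  assumes S: "symmetric_mat S"
  shows "\<exists>l\<in>spec S. \<forall>x. x \<bullet> (S *v x) \<le> l * (norm x)\<^sup>2"
proof -
  let ?q = "\<lambda>x. x \<bullet> (S *v x)"
  have "sphere (0::real^'n) 1 \<noteq> {}"
    using norm_axis_1[of undefined] by (metis mem_sphere_0 empty_iff)
  moreover have "continuous_on (sphere 0 1) ?q"
    by (intro continuous_intros linear_continuous_on matrix_vector_mul_bounded_linear)
  ultimately obtain v where "v \<in> sphere 0 1" "\<forall>y\<in>sphere 0 1. ?q y \<le> ?q v"
    using continuous_attains_sup[OF compact_sphere] by blast
  then have v: "norm v = 1" and max: "\<And>y. norm y = 1 \<Longrightarrow> ?q y \<le> ?q v"
    by simp_all
  define l where "l = ?q v"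
  have le: "?q x \<le> l * (norm x)\<^sup>2" for x
  proof (cases "x = 0")
    case False
    have "?q ((1 / norm x) *\<^sub>R x) \<le> l"
      using max[of "(1 / norm x) *\<^sub>R x"] False by (simp add: l_def)
    then show ?thesis
      using False by (simp add: matrix_vector_mult_scaleR field_simps power2_eq_square)
  qed simp
  \<comment> \<open>first-order optimality of the maximiser \<open>v\<close> in the direction \<open>w\<close>\<close>
  have "2 * ((S *v v - l *\<^sub>R v) \<bullet> w) = 0" for w
  proof (rule linear_coeff_eq_0_if_quadratic_nonpos)
    fix t
    have "(norm (v + t *\<^sub>R w))\<^sup>2 = 1 + 2 * t * (v \<bullet> w) + t\<^sup>2 * (norm w)\<^sup>2"
      using v dot_square_norm[of v] dot_square_norm[of w]
      unfolding power2_norm_eq_inner[of "v + t *\<^sub>R w"]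
      by (simp add: inner_add_left inner_add_right inner_commute algebra_simps power2_eq_square)
    then show "t * (2 * ((S *v v - l *\<^sub>R v) \<bullet> w)) + t\<^sup>2 * (?q w - l * (norm w)\<^sup>2) \<le> 0"
      using le[of "v + t *\<^sub>R w"] quadratic_form_add_scaleR[OF S, of v t w]
      by (simp add: l_def inner_diff_left algebra_simps)
  qed
  then have "S *v v = l *\<^sub>R v"
    by (metis inner_eq_zero_iff mult_eq_0_iff right_minus_eq zero_neq_numeral)
  with v have "l \<in> spec S"
    by (auto simp: in_spec_iff intro!: exI[of _ v])
  with le show ?thesis
    by blast
qed

lemma symmetric_rayleigh_min:
  fixes S :: "real^'n^'n"
  assumes "symmetric_mat S"
  shows "\<exists>m\<in>spec S. \<forall>x. m * (norm x)\<^sup>2 \<le> x \<bullet> (S *v x)"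
proof -
  obtain l v where "v \<noteq> 0" "- S *v v = l *\<^sub>R v"
    and le: "\<And>x. x \<bullet> (- S *v x) \<le> l * (norm x)\<^sup>2"
    using symmetric_rayleigh_max[OF symmetric_mat_uminus[OF assms]] by (auto simp: in_spec_iff)
  then have "S *v v = (- l) *\<^sub>R v"
    by (metis minus_minus scaleR_minus_left uminus_matrix_vector_mult)
  with \<open>v \<noteq> 0\<close> have "- l \<in> spec S"
    by (auto simp: in_spec_iff)
  moreover have "- l * (norm x)\<^sup>2 \<le> x \<bullet> (S *v x)" for x
    using le[of x] by (simp add: uminus_matrix_vector_mult)
  ultimately show ?thesis
    by blast
qed

lemma spec_square_imp_spec:
  fixes T :: "real^'n^'n"
  assumes "s\<^sup>2 \<in> spec (T ** T)"
  shows "s \<in> spec T \<or> - s \<in> spec T"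
proof -
  obtain v where "v \<noteq> 0" and v: "T *v (T *v v) = s\<^sup>2 *\<^sub>R v"
    using assms by (auto simp: in_spec_iff matrix_vector_mul_assoc)
  \<comment> \<open>\<open>(T - s) (T + s) v = 0\<close>: either \<open>(T + s) v\<close> is an eigenvector for \<open>s\<close> or \<open>v\<close> is one for \<open>- s\<close>\<close>
  define w where "w = T *v v + s *\<^sub>R v"
  have Tw: "T *v w = s *\<^sub>R w"
    using v by (simp add: w_def matrix_vector_right_distrib matrix_vector_mult_scaleR
        algebra_simps power2_eq_square)
  show ?thesis
  proof (cases "w = 0")
    case True
    then have "T *v v = (- s) *\<^sub>R v"
      by (simp add: w_def eq_neg_iff_add_eq_0)
    with \<open>v \<noteq> 0\<close> show ?thesis
      by (auto simp: in_spec_iff)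
  next
    case False
    with Tw show ?thesis
      by (auto simp: in_spec_iff)
  qed
qed

lemma inner_square_symmetric_mat:
  assumes "symmetric_mat T"
  shows "x \<bullet> ((T ** T) *v x) = (norm (T *v x))\<^sup>2"
  by (simp add: inner_symmetric_mat[OF assms] power2_norm_eq_inner flip: matrix_vector_mul_assoc)

lemma spec_square_symmetric_mat:
  fixes T :: "real^'n^'n"
  assumes T: "symmetric_mat T" "spec T \<subseteq> {a..b}" and "0 \<le> a" and "\<mu> \<in> spec (T ** T)"
  shows "\<exists>s\<in>{a..b}. \<mu> = s\<^sup>2"
proof -
  obtain v where "v \<noteq> 0" and v: "(T ** T) *v v = \<mu> *\<^sub>R v"
    using assms(4) by (auto simp: in_spec_iff)
  have "\<mu> * (norm v)\<^sup>2 = (norm (T *v v))\<^sup>2"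
    using inner_square_symmetric_mat[OF T(1), of v] by (simp add: v power2_norm_eq_inner)
  then have "0 \<le> \<mu> * (norm v)\<^sup>2"
    by simp
  with \<open>v \<noteq> 0\<close> have "0 \<le> \<mu>"
    by (simp add: zero_le_mult_iff)
  then have "sqrt \<mu> \<in> spec T \<or> - sqrt \<mu> \<in> spec T"
    using spec_square_imp_spec[of "sqrt \<mu>" T] assms(4) by simp
  then have "sqrt \<mu> \<in> {a..b}"
  proof
    assume "- sqrt \<mu> \<in> spec T"
    then have "- sqrt \<mu> \<in> {a..b}"
      using T(2) by blast
    with \<open>0 \<le> a\<close> real_sqrt_ge_zero[OF \<open>0 \<le> \<mu>\<close>] show ?thesis
      unfolding atLeastAtMost_iff by linarith
  qed (use T(2) in blast)
  with \<open>0 \<le> \<mu>\<close> show ?thesis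
    by (metis real_sqrt_pow2)
qed

lemma symmetric_spec_norm_bounds:
  fixes T :: "real^'n^'n"
  assumes T: "symmetric_mat T" "spec T \<subseteq> {a..b}" and "0 \<le> a"
  shows "a * norm x \<le> norm (T *v x)" "norm (T *v x) \<le> b * norm x"
proof -
  note sq = symmetric_mat_square[OF T(1)] and q = inner_square_symmetric_mat[OF T(1)]
  obtain r where r: "r \<in> {a..b}" "\<And>x. r\<^sup>2 * (norm x)\<^sup>2 \<le> (norm (T *v x))\<^sup>2"
    using symmetric_rayleigh_min[OF sq] spec_square_symmetric_mat[OF T \<open>0 \<le> a\<close>] q by metis
  have "(r * norm x)\<^sup>2 \<le> (norm (T *v x))\<^sup>2"
    using r(2)[of x] by (simp add: power_mult_distrib)
  then have "r * norm x \<le> norm (T *v x)"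
    by (rule power2_le_imp_le) simp
  then show "a * norm x \<le> norm (T *v x)"
    using r(1) by (meson atLeastAtMost_iff mult_right_mono norm_ge_zero order_trans)
  obtain s where s: "s \<in> {a..b}" "\<And>x. (norm (T *v x))\<^sup>2 \<le> s\<^sup>2 * (norm x)\<^sup>2"
    using symmetric_rayleigh_max[OF sq] spec_square_symmetric_mat[OF T \<open>0 \<le> a\<close>] q by metis
  have "(norm (T *v x))\<^sup>2 \<le> (s * norm x)\<^sup>2"
    using s(2)[of x] by (simp add: power_mult_distrib)
  then have "norm (T *v x) \<le> s * norm x"
    by (rule power2_le_imp_le) (use s(1) \<open>0 \<le> a\<close> in simp)
  then show "norm (T *v x) \<le> b * norm x"
    using s(1) by (meson atLeastAtMost_iff mult_right_mono norm_ge_zero order_trans)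
qed

section \<open>Symmetric matrices with singular values in an interval\<close>

(* Symmetric matrices whose singular values (the absolute values of the eigenvalues) lie in [a, b]. *)
definition sym_band :: "real \<Rightarrow> real \<Rightarrow> (real^'n^'n) set" where
  "sym_band a b = {T. symmetric_mat T \<and> (\<forall>x. a * norm x \<le> norm (T *v x) \<and> norm (T *v x) \<le> b * norm x)}"

lemma S_inv_set_subset_sym_band: "0 \<le> a \<Longrightarrow> S_inv_set k a b \<subseteq> sym_band a b"
  using symmetric_spec_norm_bounds by (auto simp: S_inv_set_def pos_def_mat_def sym_band_def)

lemma sym_band_le:
  fixes T :: "real^'n^'n"
  assumes "T \<in> sym_band a b"
  shows "a \<le> b"
proof -
  obtain x :: "real^'n" where "norm x = 1"
    using norm_axis_1 by blast
  moreover have "a * norm x \<le> norm (T *v x)" "norm (T *v x) \<le> b * norm x"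
    using assms by (simp_all add: sym_band_def)
  ultimately show ?thesis
    by simp
qed

lemma norm_matrix_mul_sym_band_le:
  assumes "A \<in> sym_band a b"
  shows "norm (A ** X) \<le> b * norm X" "norm (X ** A) \<le> b * norm X"
proof -
  have "transpose A = A" and bound: "\<And>x. norm (A *v x) \<le> b * norm x"
    using assms by (auto simp: sym_band_def symmetric_mat_def)
  then show "norm (A ** X) \<le> b * norm X" "norm (X ** A) \<le> b * norm X"
    using norm_matrix_mul_left_le norm_matrix_mul_right_le by metis+
qed

lemma sym_band_invertible:
  assumes "T \<in> sym_band a b" "0 < a"
  shows "invertible T"
proof -
  have "x = 0" if "T *v x = 0" for x
    using assms that by (auto simp: sym_band_def mult_le_0_iff dest: spec[of _ x])
  then show ?thesis
    using matrix_left_invertible_ker invertible_left_inverse by blast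
qed

lemma matrix_inv_sym_band:
  assumes T: "T \<in> sym_band a b" and "0 < a"
  shows "matrix_inv T \<in> sym_band (1 / b) (1 / a)"
proof -
  have "0 < b"
    using sym_band_le[OF T] \<open>0 < a\<close> by linarith
  have TP: "T *v (matrix_inv T *v y) = y" for y
    by (simp add: matrix_vector_mul_assoc matrix_inv_cancel sym_band_invertible[OF assms])
  have "1 / b * norm y \<le> norm (matrix_inv T *v y)" for y
    using T TP[of y] \<open>0 < b\<close> by (auto simp: sym_band_def field_simps dest: spec[of _ "matrix_inv T *v y"])
  moreover have "norm (matrix_inv T *v y) \<le> 1 / a * norm y" for y
    using T TP[of y] \<open>0 < a\<close> by (auto simp: sym_band_def field_simps dest: spec[of _ "matrix_inv T *v y"])
  moreover have "symmetric_mat (matrix_inv T)"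
    using T symmetric_matrix_inv sym_band_invertible[OF assms] by (auto simp: sym_band_def)
  ultimately show ?thesis
    by (simp add: sym_band_def)
qed

context
  fixes T1 T2 :: "real^'n^'n" and a b :: real
  assumes T: "T1 \<in> sym_band a b" "T2 \<in> sym_band a b" and "0 < a"
begin

lemma norm_matrix_inv_diff_le:
  "norm (matrix_inv T1 - matrix_inv T2) \<le> norm (T1 - T2) / a\<^sup>2"
proof -
  note P = matrix_inv_sym_band[OF T(1) \<open>0 < a\<close>] matrix_inv_sym_band[OF T(2) \<open>0 < a\<close>]
  have "invertible T1" "invertible T2"
    using sym_band_invertible T \<open>0 < a\<close> by blast+
  then have "norm (matrix_inv T1 - matrix_inv T2) = norm (matrix_inv T1 ** ((T2 - T1) ** matrix_inv T2))"
    by (simp add: matrix_inv_diff matrix_mul_assoc)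
  also have "\<dots> \<le> 1 / a * norm ((T2 - T1) ** matrix_inv T2)"
    by (rule norm_matrix_mul_sym_band_le(1)[OF P(1)])
  also have "\<dots> \<le> 1 / a * (1 / a * norm (T2 - T1))"
    using \<open>0 < a\<close> by (intro mult_left_mono norm_matrix_mul_sym_band_le(2)[OF P(2)]) simp
  finally show ?thesis
    by (simp add: norm_minus_commute power2_eq_square)
qed

lemma norm_Dinv_remainder_le:
  "norm (matrix_inv T1 - matrix_inv T2 - Dinv T2 (T1 - T2)) \<le> (norm (T1 - T2))\<^sup>2 / a ^ 3"
proof -
  define P1 P2 \<Delta> where "P1 = matrix_inv T1" and "P2 = matrix_inv T2" and "\<Delta> = T1 - T2"
  have P: "P1 \<in> sym_band (1 / b) (1 / a)" "P2 \<in> sym_band (1 / b) (1 / a)"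
    using matrix_inv_sym_band T \<open>0 < a\<close> by (simp_all add: P1_def P2_def)
  have "invertible T1" "invertible T2"
    using sym_band_invertible T \<open>0 < a\<close> by blast+
  then have "P1 - P2 = P1 ** (T2 - T1) ** P2"
    unfolding P1_def P2_def by (rule matrix_inv_diff)
  then have diff: "P1 - P2 = - (P1 ** \<Delta> ** P2)"
    unfolding \<Delta>_def by (metis minus_diff_eq matrix_uminus_left matrix_uminus_right)
  have "matrix_inv T1 - matrix_inv T2 - Dinv T2 (T1 - T2) = (P1 - P2) + P2 ** \<Delta> ** P2"
    by (simp add: Dinv_def P1_def P2_def \<Delta>_def)
  also have "\<dots> = (P2 - P1) ** \<Delta> ** P2"
    by (simp add: diff matrix_diff_rdistrib)
  also have "\<dots> = P1 ** (\<Delta> ** (P2 ** (\<Delta> ** P2)))"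
    using diff by (metis minus_diff_eq minus_minus matrix_mul_assoc)
  finally have remainder: "matrix_inv T1 - matrix_inv T2 - Dinv T2 (T1 - T2)
      = P1 ** (\<Delta> ** (P2 ** (\<Delta> ** P2)))" .
  have "norm (P1 ** (\<Delta> ** (P2 ** (\<Delta> ** P2)))) \<le> 1 / a * norm (\<Delta> ** (P2 ** (\<Delta> ** P2)))"
    by (rule norm_matrix_mul_sym_band_le(1)[OF P(1)])
  also have "\<dots> \<le> 1 / a * (norm \<Delta> * norm (P2 ** (\<Delta> ** P2)))"
    using \<open>0 < a\<close> by (intro mult_left_mono norm_matrix_mul_le) simp
  also have "\<dots> \<le> 1 / a * (norm \<Delta> * (1 / a * norm (\<Delta> ** P2)))"
    using \<open>0 < a\<close> by (intro mult_left_mono norm_matrix_mul_sym_band_le(1)[OF P(2)]) simp_all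
  also have "\<dots> \<le> 1 / a * (norm \<Delta> * (1 / a * (1 / a * norm \<Delta>)))"
    using \<open>0 < a\<close> by (intro mult_left_mono norm_matrix_mul_sym_band_le(2)[OF P(2)]) simp_all
  finally show ?thesis
    by (simp add: remainder \<Delta>_def power2_eq_square power3_eq_cube)
qed

lemma norm_Dinv_diff_le:
  "norm (Dinv T1 H - Dinv T2 H) \<le> 2 * norm (T1 - T2) * norm H / a ^ 3"
proof -
  define P1 P2 D where "P1 = matrix_inv T1" and "P2 = matrix_inv T2" and "D = P1 - P2"
  have P: "P1 \<in> sym_band (1 / b) (1 / a)" "P2 \<in> sym_band (1 / b) (1 / a)"
    using matrix_inv_sym_band T \<open>0 < a\<close> by (simp_all add: P1_def P2_def)
  have "Dinv T1 H - Dinv T2 H = - (D ** H ** P1 + P2 ** H ** D)"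
    by (simp add: Dinv_def P1_def P2_def D_def matrix_diff_ldistrib matrix_diff_rdistrib
        matrix_mul_assoc)
  then have "norm (Dinv T1 H - Dinv T2 H) \<le> norm (D ** H ** P1) + norm (P2 ** (H ** D))"
    by (metis norm_minus_cancel norm_triangle_ineq matrix_mul_assoc)
  also have "\<dots> \<le> 1 / a * (norm D * norm H) + 1 / a * (norm H * norm D)"
  proof (intro add_mono)
    show "norm (D ** H ** P1) \<le> 1 / a * (norm D * norm H)"
      using norm_matrix_mul_sym_band_le(2)[OF P(1)] norm_matrix_mul_le[of D H] \<open>0 < a\<close>
      by (meson order_trans mult_left_mono less_imp_le zero_le_divide_1_iff)
    show "norm (P2 ** (H ** D)) \<le> 1 / a * (norm H * norm D)"
      using norm_matrix_mul_sym_band_le(1)[OF P(2)] norm_matrix_mul_le[of H D] \<open>0 < a\<close>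
      by (meson order_trans mult_left_mono less_imp_le zero_le_divide_1_iff)
  qed
  also have "\<dots> = 2 / a * (norm D * norm H)"
    by (simp add: field_simps)
  also have "\<dots> \<le> 2 / a * (norm (T1 - T2) / a\<^sup>2 * norm H)"
    using norm_matrix_inv_diff_le \<open>0 < a\<close> unfolding D_def P1_def P2_def
    by (intro mult_left_mono mult_right_mono) simp_all
  finally show ?thesis
    by (simp add: power2_eq_square power3_eq_cube)
qed

end

lemma norm_diff_le_matrix_inv_diff:
  assumes "T1 \<in> sym_band a b" "T2 \<in> sym_band a b" "0 < a"
  shows "norm (T1 - T2) \<le> b\<^sup>2 * norm (matrix_inv T1 - matrix_inv T2)"
proof -
  have "0 < b"
    using sym_band_le[OF assms(1)] assms(3) by linarith
  have "norm (matrix_inv (matrix_inv T1) - matrix_inv (matrix_inv T2))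
      \<le> norm (matrix_inv T1 - matrix_inv T2) / (1 / b)\<^sup>2"
    using \<open>0 < b\<close> matrix_inv_sym_band assms by (intro norm_matrix_inv_diff_le) simp_all
  moreover have "invertible T1" "invertible T2"
    using sym_band_invertible assms by blast+
  ultimately show ?thesis
    by (simp add: matrix_inv_matrix_inv power_divide mult.commute)
qed

section \<open>Transfer to the \<Lambda>-norm\<close>

lemma symmetric_Dinv:
  "symmetric_mat (matrix_inv \<Theta>) \<Longrightarrow> symmetric_mat H \<Longrightarrow> symmetric_mat (Dinv \<Theta> H)"
  unfolding Dinv_def by (intro symmetric_mat_uminus symmetric_mat_sandwich)

lemma op_norm_lam_le:
  assumes "\<And>H. symmetric_mat H \<Longrightarrow> frob_norm H \<le> 1 \<Longrightarrow> lam_norm \<Lambda> (T H) \<le> c"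
  shows "op_norm_lam \<Lambda> T \<le> c"
  unfolding op_norm_lam_def
  using symmetric_mat_zero assms by (intro cSup_least) (auto simp: frob_norm_eq_norm)

lemma lam_norm_matrix_inv_estimates:
  fixes \<Lambda> :: "(real^'n) measure" and \<Theta>1 \<Theta>2 :: "real^'n^'n"
  assumes equiv: "\<And>M. symmetric_mat M \<Longrightarrow> cF * norm M \<le> lam_norm \<Lambda> M \<and> lam_norm \<Lambda> M \<le> CF * norm M"
    and "0 \<le> cF" "0 \<le> CF"
    and \<Theta>: "\<Theta>1 \<in> sym_band a b" "\<Theta>2 \<in> sym_band a b" and "0 < a"
  shows "cF / b^2 * norm (\<Theta>1 - \<Theta>2) \<le> lam_norm \<Lambda> (matrix_inv \<Theta>1 - matrix_inv \<Theta>2)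
    \<and> lam_norm \<Lambda> (matrix_inv \<Theta>1 - matrix_inv \<Theta>2) \<le> CF / a^2 * norm (\<Theta>1 - \<Theta>2)
    \<and> lam_norm \<Lambda> (matrix_inv \<Theta>1 - matrix_inv \<Theta>2 - Dinv \<Theta>2 (\<Theta>1 - \<Theta>2))
        \<le> CF / a^3 * (norm (\<Theta>1 - \<Theta>2))^2
    \<and> op_norm_lam \<Lambda> (\<lambda>H. Dinv \<Theta>1 H - Dinv \<Theta>2 H) \<le> 2 * (CF / a^3) * norm (\<Theta>1 - \<Theta>2)"
proof -
  have "0 < b"
    using sym_band_le[OF \<Theta>(1)] \<open>0 < a\<close> by linarith
  have sym: "symmetric_mat (matrix_inv \<Theta>1)" "symmetric_mat (matrix_inv \<Theta>2)"
    using \<Theta> matrix_inv_sym_band \<open>0 < a\<close> by (auto simp: sym_band_def)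
  then have sym_diff: "symmetric_mat (matrix_inv \<Theta>1 - matrix_inv \<Theta>2)"
    and sym_rem: "symmetric_mat (matrix_inv \<Theta>1 - matrix_inv \<Theta>2 - Dinv \<Theta>2 (\<Theta>1 - \<Theta>2))"
    using \<Theta> by (auto simp: sym_band_def intro!: symmetric_mat_diff symmetric_Dinv)
  have "cF / b^2 * norm (\<Theta>1 - \<Theta>2) \<le> cF / b^2 * (b^2 * norm (matrix_inv \<Theta>1 - matrix_inv \<Theta>2))"
    using \<open>0 \<le> cF\<close> by (intro mult_left_mono norm_diff_le_matrix_inv_diff[OF \<Theta> \<open>0 < a\<close>]) simp
  also have "\<dots> = cF * norm (matrix_inv \<Theta>1 - matrix_inv \<Theta>2)"
    using \<open>0 < b\<close> by simp
  finally have "cF / b^2 * norm (\<Theta>1 - \<Theta>2) \<le> cF * norm (matrix_inv \<Theta>1 - matrix_inv \<Theta>2)" .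
  moreover have "CF * norm (matrix_inv \<Theta>1 - matrix_inv \<Theta>2) \<le> CF / a^2 * norm (\<Theta>1 - \<Theta>2)"
    using mult_left_mono[OF norm_matrix_inv_diff_le[OF \<Theta> \<open>0 < a\<close>] \<open>0 \<le> CF\<close>] by simp
  moreover have "CF * norm (matrix_inv \<Theta>1 - matrix_inv \<Theta>2 - Dinv \<Theta>2 (\<Theta>1 - \<Theta>2))
      \<le> CF / a^3 * (norm (\<Theta>1 - \<Theta>2))\<^sup>2"
    using mult_left_mono[OF norm_Dinv_remainder_le[OF \<Theta> \<open>0 < a\<close>] \<open>0 \<le> CF\<close>] by simp
  moreover have "op_norm_lam \<Lambda> (\<lambda>H. Dinv \<Theta>1 H - Dinv \<Theta>2 H) \<le> 2 * (CF / a^3) * norm (\<Theta>1 - \<Theta>2)"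
  proof (rule op_norm_lam_le)
    fix H :: "real^'n^'n"
    assume H: "symmetric_mat H" "frob_norm H \<le> 1"
    have "symmetric_mat (Dinv \<Theta>1 H - Dinv \<Theta>2 H)"
      by (intro symmetric_mat_diff symmetric_Dinv sym H(1))
    then have "lam_norm \<Lambda> (Dinv \<Theta>1 H - Dinv \<Theta>2 H) \<le> CF * norm (Dinv \<Theta>1 H - Dinv \<Theta>2 H)"
      using equiv by blast
    also have "\<dots> \<le> CF * (2 * norm (\<Theta>1 - \<Theta>2) * norm H / a^3)"
      using norm_Dinv_diff_le[OF \<Theta> \<open>0 < a\<close>] \<open>0 \<le> CF\<close> by (rule mult_left_mono)
    also have "\<dots> \<le> CF * (2 * norm (\<Theta>1 - \<Theta>2) / a^3)"
      using H(2) \<open>0 < a\<close> \<open>0 \<le> CF\<close>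
      by (intro mult_left_mono) (simp_all add: frob_norm_eq_norm divide_right_mono mult_left_le)
    also have "\<dots> = 2 * (CF / a^3) * norm (\<Theta>1 - \<Theta>2)"
      by simp
    finally show "lam_norm \<Lambda> (Dinv \<Theta>1 H - Dinv \<Theta>2 H) \<le> 2 * (CF / a^3) * norm (\<Theta>1 - \<Theta>2)" .
  qed
  ultimately show ?thesis
    using equiv sym_diff sym_rem by (meson order_trans)
qed

theorem lemma1:
  fixes \<Lambda> :: "(real^'n) measure" and cF CF a b :: real and k :: nat
  assumes "\<Lambda> \<in> {Lambda_G, Lambda_U}"
    and "cF > 0" and "CF > 0"
    and "\<forall>M :: real^'n^'n. symmetric_mat M \<longrightarrow>
           cF * frob_norm M \<le> lam_norm \<Lambda> M \<and> lam_norm \<Lambda> M \<le> CF * frob_norm M"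
    and "0 < a" and "a \<le> b"
  shows "\<forall>\<Theta>1 \<in> S_inv_set k a b. \<forall>\<Theta>2 \<in> S_inv_set k a b.
           (cF / b^2) * frob_norm (\<Theta>1 - \<Theta>2) \<le> lam_norm \<Lambda> (matrix_inv \<Theta>1 - matrix_inv \<Theta>2)
         \<and> lam_norm \<Lambda> (matrix_inv \<Theta>1 - matrix_inv \<Theta>2) \<le> (CF / a^2) * frob_norm (\<Theta>1 - \<Theta>2)
         \<and> lam_norm \<Lambda> (matrix_inv \<Theta>1 - matrix_inv \<Theta>2 - Dinv \<Theta>2 (\<Theta>1 - \<Theta>2))
             \<le> (CF / a^3) * (frob_norm (\<Theta>1 - \<Theta>2))^2
         \<and> op_norm_lam \<Lambda> (\<lambda>H. Dinv \<Theta>1 H - Dinv \<Theta>2 H)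
             \<le> (2 * (CF / a^3)) * frob_norm (\<Theta>1 - \<Theta>2)"
proof -
  have band: "\<Theta> \<in> sym_band a b" if "\<Theta> \<in> S_inv_set k a b" for \<Theta> :: "real^'n^'n"
    using S_inv_set_subset_sym_band \<open>0 < a\<close> that by (meson less_imp_le subsetD)
  have equiv: "\<And>M. symmetric_mat M \<Longrightarrow> cF * norm M \<le> lam_norm \<Lambda> M \<and> lam_norm \<Lambda> M \<le> CF * norm M"
    using assms(4) by (simp add: frob_norm_eq_norm)
  show ?thesis
    unfolding frob_norm_eq_norm
    using \<open>cF > 0\<close> \<open>CF > 0\<close> \<open>0 < a\<close>
    by (intro ballI lam_norm_matrix_inv_estimates[OF equiv] band) simp_all
qed

end
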